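(* Let $(R,\cdot,\alpha)$ be a weakly unital hom-associative ring with weak unit $e$, and let $\delta$ be a derivation on $R$ with $\alpha\circ\delta=\delta\circ\alpha$. Extend $\alpha$ homogeneously to the differential polynomial ring $R[X;\mathrm{id}_R,\delta]$. Then: (i) $a\cdot\delta^n(e)=\delta^n(e)\cdot a=0$ for all $a\in R$ and $n\in\mathbb{N}_{>0}$; (ii) $e=eX^0$ is a weak unit in $R[X;\mathrm{id}_R,\delta]$, i.e. $e\cdot q=q\cdot e=\alpha(q)$ for all $q\in R[X;\mathrm{id}_R,\delta]$; (iii) for every $q=\sum_{i=0}^nq_iX^i\in R[X;\mathrm{id}_R,\delta]$, $\ eX\cdot q-q\cdot eX=\sum_{i=0}^n\alpha(\delta(q_i))X^i$.
   Context: A hom-associative ring is a triple $(R,\cdot,\alpha)$ where $R$ is an abelian group with a biadditive (not necessarily associative or unital) multiplication and an additive map $\alpha$ with $\alpha(a)\cdot(b\cdot c)=(a\cdot b)\cdot\alpha(c)$ for all $a,b,c$. It is weakly unital with weak unit $e$ if $e\cdot a=a\cdot e=\alpha(a)$ for all $a\in R$. A derivation is an additive map $\delta$ with $\delta(ab)=a\delta(b)+\delta(a)b$. The differential polynomial ring $R[X;\mathrm{id}_R,\delta]$ is the set of formal sums $\sum_{i\in\mathbb{N}}a_iX^i$ ($a_i\in R$, finitely many nonzero) with coefficientwise addition and the distributive multiplication $aX^m\cdot bX^n=\sum_{i=0}^m\binom{m}{i}\big(a\cdot\delta^{m-i}(b)\big)X^{i+n}$; $R$ is identified with $RX^0$,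 and $eX$ denotes the element with coefficient $e$ at $X^1$ and $0$ elsewhere. $\mathbb{N}$ is the non-negative integers, $\mathbb{N}_{>0}$ the positive ones. The homogeneous extension of $\alpha$ is $\alpha\left(\sum_ia_iX^i\right):=\sum_i\alpha(a_i)X^i$. *)

theory Defs
  imports "HOL-Computational_Algebra.Polynomial"
begin

definition hom_assoc_ring :: "('a::ab_group_add \<Rightarrow> 'a \<Rightarrow> 'a) \<Rightarrow> ('a \<Rightarrow> 'a) \<Rightarrow> bool" where
  "hom_assoc_ring mul alpha \<longleftrightarrow>
     (\<forall>a b c. mul (a + b) c = mul a c + mul b c) \<and>
     (\<forall>a b c. mul a (b + c) = mul a b + mul a c) \<and>
     (\<forall>a b. alpha (a + b) = alpha a + alpha b) \<and>
     (\<forall>a b c. mul (alpha a) (mul b c) = mul (mul a b) (alpha c))"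

definition weak_unit :: "('a \<Rightarrow> 'a \<Rightarrow> 'a) \<Rightarrow> ('a \<Rightarrow> 'a) \<Rightarrow> 'a \<Rightarrow> bool" where
  "weak_unit mul alpha e \<longleftrightarrow> (\<forall>a. mul e a = alpha a \<and> mul a e = alpha a)"

definition derivation :: "('a::ab_group_add \<Rightarrow> 'a \<Rightarrow> 'a) \<Rightarrow> ('a \<Rightarrow> 'a) \<Rightarrow> bool" where
  "derivation mul delta \<longleftrightarrow>
     (\<forall>a b. delta (a + b) = delta a + delta b) \<and>
     (\<forall>a b. delta (mul a b) = mul a (delta b) + mul (delta a) b)"

definition nsmul :: "nat \<Rightarrow> 'a::comm_monoid_add \<Rightarrow> 'a" where
  "nsmul n x = (\<Sum>j<n. x)"

text \<open>Multiplication of the differential polynomial ring R[X; id, delta]: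
  distributive extension of a X^m * b X^n = sum_{i=0}^m (m choose i) (a * delta^(m-i) b) X^(i+n).\<close>
definition dp_mult :: "('a::ab_group_add \<Rightarrow> 'a \<Rightarrow> 'a) \<Rightarrow> ('a \<Rightarrow> 'a) \<Rightarrow> 'a poly \<Rightarrow> 'a poly \<Rightarrow> 'a poly" where
  "dp_mult mul delta p q =
     (\<Sum>m\<le>degree p. \<Sum>n\<le>degree q. \<Sum>i\<le>m.
        monom (nsmul (m choose i) (mul (coeff p m) ((delta ^^ (m - i)) (coeff q n)))) (i + n))"

end

theory Submission
  imports Defs
begin

text \<open>Differentiating e a = alpha a = a e, and using that delta commutes with alpha, shows that
  delta e annihilates R from both sides; differentiating a (delta^n e) = 0 = (delta^n e) a
  propagates this to all higher derivatives. Consequently, in the product of e X^m with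
  anything, only the term without derivatives of e survives, which makes e X^0 a weak unit
  of R[X; id, delta] and reduces eX q - q eX to the derivative part of eX q.\<close>

lemma hom_assoc_ring_mul_0_left: "hom_assoc_ring mul alpha \<Longrightarrow> mul 0 x = 0"
  unfolding hom_assoc_ring_def by (metis add_cancel_right_right add_0)

lemma hom_assoc_ring_mul_0_right: "hom_assoc_ring mul alpha \<Longrightarrow> mul x 0 = 0"
  unfolding hom_assoc_ring_def by (metis add_cancel_right_right add_0)

lemma hom_assoc_ring_alpha_0: "hom_assoc_ring mul alpha \<Longrightarrow> alpha 0 = 0"
  unfolding hom_assoc_ring_def by (metis add_cancel_right_right add_0)

lemma derivation_0: "derivation mul delta \<Longrightarrow> delta 0 = 0"
  unfolding derivation_def by (metis add_cancel_right_right add_0)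

lemma funpow_derivation_0: "derivation mul delta \<Longrightarrow> (delta ^^ k) 0 = 0"
  by (induction k) (simp_all add: derivation_0)

lemma nsmul_0 [simp]: "nsmul k 0 = 0"
  by (simp add: nsmul_def)

lemma nsmul_Suc_0 [simp]: "nsmul (Suc 0) x = x"
  by (simp add: nsmul_def)

lemma weak_unit_derivation_power_annihilates:
  assumes e: "weak_unit mul alpha e" and d: "derivation mul delta"
    and comm: "alpha \<circ> delta = delta \<circ> alpha" and "n > 0"
  shows "mul a ((delta ^^ n) e) = 0 \<and> mul ((delta ^^ n) e) a = 0"
proof -
  have dmul: "\<And>a b. delta (mul a b) = mul a (delta b) + mul (delta a) b"
    using d by (simp add: derivation_def)
  have eu: "\<And>a. mul e a = alpha a" "\<And>a. mul a e = alpha a"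
    using e by (simp_all add: weak_unit_def)
  have alpha_delta: "\<And>a. alpha (delta a) = delta (alpha a)"
    using comm by (metis comp_apply)
  have "\<forall>a. mul a ((delta ^^ Suc k) e) = 0 \<and> mul ((delta ^^ Suc k) e) a = 0" for k
  proof (induction k)
    case 0
    show ?case
      using dmul[of e] dmul[of _ e] by (simp add: eu alpha_delta)
  next
    case (Suc k)
    then show ?case
      using dmul[of _ "(delta ^^ Suc k) e"] dmul[of "(delta ^^ Suc k) e"]
      by (simp add: derivation_0[OF d])
  qed
  then show ?thesis
    using \<open>n > 0\<close> gr0_conv_Suc by metis
qed

lemma dp_mult_eq_sum_bounds:
  assumes R: "hom_assoc_ring mul alpha" and d: "derivation mul delta"
    and "degree p \<le> M" and "degree q \<le> N"
  shows "dp_mult mul delta p q =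
     (\<Sum>m\<le>M. \<Sum>n\<le>N. \<Sum>i\<le>m.
        monom (nsmul (m choose i) (mul (coeff p m) ((delta ^^ (m - i)) (coeff q n)))) (i + n))"
proof -
  have "dp_mult mul delta p q =
     (\<Sum>m\<le>M. \<Sum>n\<le>degree q. \<Sum>i\<le>m.
        monom (nsmul (m choose i) (mul (coeff p m) ((delta ^^ (m - i)) (coeff q n)))) (i + n))"
    unfolding dp_mult_def
    by (rule sum.mono_neutral_left)
      (use \<open>degree p \<le> M\<close> in \<open>auto simp: coeff_eq_0 hom_assoc_ring_mul_0_left[OF R]\<close>)
  also have "\<dots> = (\<Sum>m\<le>M. \<Sum>n\<le>N. \<Sum>i\<le>m.
        monom (nsmul (m choose i) (mul (coeff p m) ((delta ^^ (m - i)) (coeff q n)))) (i + n))"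
    by (intro sum.cong refl sum.mono_neutral_left)
      (use \<open>degree q \<le> N\<close> in
        \<open>auto simp: coeff_eq_0 hom_assoc_ring_mul_0_right[OF R] funpow_derivation_0[OF d]\<close>)
  finally show ?thesis .
qed

lemma dp_mult_monom_0_left:
  assumes "hom_assoc_ring mul alpha" and "derivation mul delta"
  shows "dp_mult mul delta (monom c 0) q = (\<Sum>n\<le>degree q. monom (mul c (coeff q n)) n)"
  using degree_monom_le[of c 0]
  by (subst dp_mult_eq_sum_bounds[OF assms, of _ 0 _ "degree q"]) simp_all

lemma dp_mult_monom_1_left:
  assumes R: "hom_assoc_ring mul alpha" and "derivation mul delta"
  shows "dp_mult mul delta (monom c 1) q =
    (\<Sum>n\<le>degree q. monom (mul c (delta (coeff q n))) n + monom (mul c (coeff q n)) (Suc n))"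
  by (subst dp_mult_eq_sum_bounds[OF assms, of _ 1 _ "degree q"])
    (simp_all add: degree_monom_le coeff_monom hom_assoc_ring_mul_0_left[OF R])

lemma dp_mult_monom_right:
  assumes R: "hom_assoc_ring mul alpha" and d: "derivation mul delta"
  shows "dp_mult mul delta q (monom c k) = (\<Sum>m\<le>degree q. \<Sum>i\<le>m.
    monom (nsmul (m choose i) (mul (coeff q m) ((delta ^^ (m - i)) c))) (i + k))"
proof -
  have "dp_mult mul delta q (monom c k) = (\<Sum>m\<le>degree q. \<Sum>n\<le>k. \<Sum>i\<le>m.
    monom (nsmul (m choose i) (mul (coeff q m) ((delta ^^ (m - i)) (coeff (monom c k) n)))) (i + n))"
    by (rule dp_mult_eq_sum_bounds[OF R d]) (simp_all add: degree_monom_le)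
  also have "\<dots> = (\<Sum>m\<le>degree q. \<Sum>i\<le>m.
    monom (nsmul (m choose i) (mul (coeff q m) ((delta ^^ (m - i)) c))) (i + k))"
  proof -
    have "(\<Sum>n\<le>k. \<Sum>i\<le>m. monom (nsmul (m choose i)
        (mul (coeff q m) ((delta ^^ (m - i)) (coeff (monom c k) n)))) (i + n))
      = (\<Sum>n\<le>k. if k = n then (\<Sum>i\<le>m.
          monom (nsmul (m choose i) (mul (coeff q m) ((delta ^^ (m - i)) c))) (i + k)) else 0)"
      for m
      by (intro sum.cong refl)
        (auto simp: hom_assoc_ring_mul_0_right[OF R] funpow_derivation_0[OF d])
    then show ?thesis by simp
  qed
  finally show ?thesis .
qed

text \<open>In the Leibniz expansion of x X^m times e X^k, every term with a derivative of e vanishes.\<close>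

lemma sum_leibniz_weak_unit:
  assumes e: "weak_unit mul alpha e" and d: "derivation mul delta"
    and comm: "alpha \<circ> delta = delta \<circ> alpha"
  shows "(\<Sum>i\<le>m. monom (nsmul (m choose i) (mul x ((delta ^^ (m - i)) e))) (i + k))
    = monom (alpha x) (m + k)"
proof -
  have "(\<Sum>i\<le>m. monom (nsmul (m choose i) (mul x ((delta ^^ (m - i)) e))) (i + k))
      = (\<Sum>i<m. monom (nsmul (m choose i) (mul x ((delta ^^ (m - i)) e))) (i + k))
        + monom (alpha x) (m + k)"
    using e by (simp add: lessThan_Suc_atMost[symmetric] weak_unit_def)
  also have "(\<Sum>i<m. monom (nsmul (m choose i) (mul x ((delta ^^ (m - i)) e))) (i + k)) = 0"
    by (intro sum.neutral ballI)
      (simp add: weak_unit_derivation_power_annihilates[OF e d comm])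
  finally show ?thesis by simp
qed

lemma map_poly_eq_sum_monom:
  assumes "f 0 = 0"
  shows "map_poly f q = (\<Sum>n\<le>degree q. monom (f (coeff q n)) n)"
  by (rule poly_eqI) (auto simp: coeff_sum coeff_monom coeff_map_poly assms coeff_eq_0)

lemma dp_mult_weak_unit:
  assumes R: "hom_assoc_ring mul alpha" and e: "weak_unit mul alpha e"
    and d: "derivation mul delta" and comm: "alpha \<circ> delta = delta \<circ> alpha"
  shows "dp_mult mul delta (monom e 0) q = map_poly alpha q"
    and "dp_mult mul delta q (monom e 0) = map_poly alpha q"
proof -
  have "dp_mult mul delta q (monom e 0) = (\<Sum>m\<le>degree q. monom (alpha (coeff q m)) m)"
    using sum_leibniz_weak_unit[OF e d comm, where k = 0] by (simp add: dp_mult_monom_right[OF R d])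
  moreover have "dp_mult mul delta (monom e 0) q = (\<Sum>m\<le>degree q. monom (alpha (coeff q m)) m)"
    using e by (simp add: dp_mult_monom_0_left[OF R d] weak_unit_def)
  ultimately show "dp_mult mul delta (monom e 0) q = map_poly alpha q"
    and "dp_mult mul delta q (monom e 0) = map_poly alpha q"
    by (simp_all add: map_poly_eq_sum_monom hom_assoc_ring_alpha_0[OF R])
qed

text \<open>The terms e (delta q_i) X^i of eX q are the only ones not matched by q eX.\<close>

lemma dp_mult_eX_commutator:
  assumes R: "hom_assoc_ring mul alpha" and e: "weak_unit mul alpha e"
    and d: "derivation mul delta" and comm: "alpha \<circ> delta = delta \<circ> alpha"
  shows "dp_mult mul delta (monom e 1) q - dp_mult mul delta q (monom e 1)
    = (\<Sum>i\<le>degree q. monom (alpha (delta (coeff q i))) i)"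
proof -
  have "dp_mult mul delta (monom e 1) q = (\<Sum>i\<le>degree q.
      monom (alpha (delta (coeff q i))) i + monom (alpha (coeff q i)) (Suc i))"
    using e unfolding dp_mult_monom_1_left[OF R d] by (simp add: weak_unit_def)
  moreover have "dp_mult mul delta q (monom e 1) = (\<Sum>i\<le>degree q. monom (alpha (coeff q i)) (Suc i))"
    using sum_leibniz_weak_unit[OF e d comm, where k = 1] by (simp add: dp_mult_monom_right[OF R d])
  ultimately show ?thesis
    by (simp add: sum.distrib)
qed

theorem mainTheorem10:
  fixes mul :: "'a::ab_group_add \<Rightarrow> 'a \<Rightarrow> 'a"
    and alpha delta :: "'a \<Rightarrow> 'a"
    and e :: 'a
  assumes "hom_assoc_ring mul alpha"
    and "weak_unit mul alpha e"
    and "derivation mul delta"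
    and "alpha \<circ> delta = delta \<circ> alpha"
  shows "(\<forall>a. \<forall>n>0. mul a ((delta ^^ n) e) = 0 \<and> mul ((delta ^^ n) e) a = 0)
     \<and> (\<forall>q. dp_mult mul delta (monom e 0) q = map_poly alpha q
           \<and> dp_mult mul delta q (monom e 0) = map_poly alpha q)
     \<and> (\<forall>q. dp_mult mul delta (monom e 1) q - dp_mult mul delta q (monom e 1)
           = (\<Sum>i\<le>degree q. monom (alpha (delta (coeff q i))) i))"
  using weak_unit_derivation_power_annihilates[OF assms(2-4)]
    dp_mult_weak_unit[OF assms] dp_mult_eX_commutator[OF assms]
  by blast

end
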